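(* Let $R,R'\subseteq S_n$ be the top-$l$ and top-$m$ partial rankings $R: a_1\succ\cdots\succ a_l\succ[n]\setminus\{a_1,\dots,a_l\}$ and $R': b_1\succ\cdots\succ b_m\succ[n]\setminus\{b_1,\dots,b_m\}$. Let $\{b_{i_1},\dots,b_{i_q}\}=\{b_1,\dots,b_m\}\setminus\{a_1,\dots,a_l\}$ with $i_1<\cdots<i_q$, and let $R''\subseteq R$ be the top-$(l+q)$ partial ranking $a_1\succ\cdots\succ a_l\succ b_{i_1}\succ\cdots\succ b_{i_q}\succ[n]\setminus\{a_1,\dots,a_l,b_1,\dots,b_m\}$. If $\tau$ is uniformly distributed on $R'$, then $\Pi_R(\tau)$ is uniformly distributed on $R''$.
   Context: $S_n$ is the symmetric group on $[n]$; $\sigma\in S_n$ is identified with the full ranking $\sigma(1)\succ\cdots\succ\sigma(n)$. For distinct items $x,y$, $\{x,y\}$ is discordant for $\sigma,\tau$ if $(\sigma^{-1}(x)-\sigma^{-1}(y))(\tau^{-1}(x)-\tau^{-1}(y))<0$. The Kendall distance $d(\sigma,\tau)$ is the number of unordered discordant pairs. For $0\le k\le n$ and distinct $c_1,\dots,c_k\in[n]$, the top-$k$ partial ranking $c_1\succ\cdots\succ c_k\succ[n]\setminus\{c_1,\dots,c_k\}$ is the set $\{\sigma\in S_n:\sigma(i)=c_i,\ i\le k\}$. For $\tau\in S_n$, $\Pi_R(\tau)$ denotes the unique element of $R$ minimising $\rho\mapsto d(\rho,\tau)$ over $\rho\in R$. *)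

theory Defs
  imports "HOL-Combinatorics.Permutations" "HOL-Probability.Probability_Mass_Function"
begin

text \<open>A full ranking of [n] = {1..n} is a permutation sigma of {1..n};
  sigma i is the item in position i, inv sigma x is the position of item x.\<close>

definition discordant :: "(nat \<Rightarrow> nat) \<Rightarrow> (nat \<Rightarrow> nat) \<Rightarrow> nat \<Rightarrow> nat \<Rightarrow> bool" where
  "discordant \<sigma> \<tau> x y \<longleftrightarrow>
     (real (inv \<sigma> x) - real (inv \<sigma> y)) * (real (inv \<tau> x) - real (inv \<tau> y)) < 0"

definition kendall :: "nat \<Rightarrow> (nat \<Rightarrow> nat) \<Rightarrow> (nat \<Rightarrow> nat) \<Rightarrow> nat" where
  "kendall n \<sigma> \<tau> = card {(x, y). x \<in> {1..n} \<and> y \<in> {1..n} \<and> x < y \<and> discordant \<sigma> \<tau> x y}"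

definition topk :: "nat \<Rightarrow> nat list \<Rightarrow> (nat \<Rightarrow> nat) set" where
  "topk n cs = {\<sigma>. \<sigma> permutes {1..n} \<and> (\<forall>i < length cs. \<sigma> (i + 1) = cs ! i)}"

definition proj :: "nat \<Rightarrow> (nat \<Rightarrow> nat) set \<Rightarrow> (nat \<Rightarrow> nat) \<Rightarrow> (nat \<Rightarrow> nat)" where
  "proj n R \<tau> = (THE \<rho>. \<rho> \<in> R \<and> (\<forall>\<rho>' \<in> R. kendall n \<rho> \<tau> \<le> kendall n \<rho>' \<tau>))"

end

theory Submission
  imports Defs
begin

text \<open>All rankings of a top-k set order each pair involving a listed item in the same way,
  so the ranking of the set closest to \<open>\<tau>\<close> in Kendall distance is the one keeping the
  unlisted items in their \<open>\<tau>\<close>-order. Hence the projection commutes with relabelling the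
  items outside \<open>a\<close> and \<open>b\<close>. These relabellings preserve the uniform distribution on
  \<open>R'\<close> and act transitively on \<open>R''\<close>, which contains the image of \<open>R'\<close>, so the image
  distribution is invariant under a transitive group on \<open>R''\<close> and therefore uniform.\<close>

lemma pmf_of_set_eqI_transitive:
  assumes S: "finite S" "set_pmf \<mu> \<subseteq> S"
    and transitive: "\<And>x y. x \<in> S \<Longrightarrow> y \<in> S \<Longrightarrow> \<exists>f. inj f \<and> f x = y \<and> map_pmf f \<mu> = \<mu>"
  shows "\<mu> = pmf_of_set S"
proof (rule pmf_eqI)
  obtain x0 where x0: "x0 \<in> S"
    using S(2) set_pmf_not_empty[of \<mu>] by blast
  have const: "pmf \<mu> x = pmf \<mu> x0" if x: "x \<in> S" for x
  proof -
    obtain f where "inj f" "f x0 = x" "map_pmf f \<mu> = \<mu>"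
      using transitive[OF x0 x] by blast
    then show ?thesis
      using pmf_map_inj'[of f \<mu> x0] by simp
  qed
  have "real (card S) * pmf \<mu> x0 = 1"
    using sum_pmf_eq_1[OF S] const by simp
  then have uniform: "pmf \<mu> x0 = 1 / real (card S)"
    by (auto simp: eq_divide_eq mult.commute)
  have nonempty: "S \<noteq> {}"
    using x0 by blast
  fix x
  show "pmf \<mu> x = pmf (pmf_of_set S) x"
  proof (cases "x \<in> S")
    case True
    then show ?thesis
      using const uniform pmf_of_set[OF nonempty S(1)] by simp
  next
    case False
    then have "x \<notin> set_pmf \<mu>"
      using S(2) by blast
    then show ?thesis
      using False pmf_of_set[OF nonempty S(1)] by (simp add: pmf_eq_0_set_pmf)
  qed
qed

definition precedes :: "(nat \<Rightarrow> nat) \<Rightarrow> nat \<Rightarrow> nat \<Rightarrow> bool" where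
  "precedes \<sigma> x y \<longleftrightarrow> inv \<sigma> x < inv \<sigma> y"

definition agrees_on :: "nat set \<Rightarrow> (nat \<Rightarrow> nat) \<Rightarrow> (nat \<Rightarrow> nat) \<Rightarrow> bool" where
  "agrees_on A \<rho> \<tau> \<longleftrightarrow> (\<forall>x\<in>A. \<forall>y\<in>A. precedes \<rho> x y = precedes \<tau> x y)"

lemma precedes_irrefl: "\<not> precedes \<sigma> x x"
  by (simp add: precedes_def)

lemma precedes_asym: "precedes \<sigma> x y \<Longrightarrow> \<not> precedes \<sigma> y x"
  by (simp add: precedes_def)

lemma sorted_wrt_precedes_nth_iff:
  assumes sorted: "sorted_wrt (precedes \<tau>) ys" and "i < length ys" "j < length ys"
  shows "precedes \<tau> (ys ! i) (ys ! j) \<longleftrightarrow> i < j"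
proof (cases i j rule: linorder_cases)
  case less
  then show ?thesis
    using sorted assms(3) by (simp add: sorted_wrt_iff_nth_less)
next
  case equal
  then show ?thesis
    using precedes_irrefl by simp
next
  case greater
  then have "precedes \<tau> (ys ! j) (ys ! i)"
    using sorted assms(2) by (simp add: sorted_wrt_iff_nth_less)
  then show ?thesis
    using greater precedes_asym by auto
qed

lemma precedes_comp:
  assumes "bij \<pi>" "bij \<sigma>"
  shows "precedes (\<pi> \<circ> \<sigma>) x y = precedes \<sigma> (inv \<pi> x) (inv \<pi> y)"
  by (simp add: precedes_def o_inv_distrib[OF assms])

lemma card_precedes:
  assumes \<sigma>: "\<sigma> permutes {1..n}" and x: "x \<in> {1..n}"
  shows "card {y \<in> {1..n}. precedes \<sigma> y x} = inv \<sigma> x - 1"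
proof -
  have k: "inv \<sigma> x \<in> {1..n}"
    using permutes_in_image[OF permutes_inv[OF \<sigma>]] x by simp
  have "{y \<in> {1..n}. precedes \<sigma> y x} = \<sigma> ` {1..<inv \<sigma> x}"
  proof (intro set_eqI iffI)
    fix y assume y: "y \<in> {y \<in> {1..n}. precedes \<sigma> y x}"
    then have "inv \<sigma> y \<in> {1..<inv \<sigma> x}"
      using permutes_in_image[OF permutes_inv[OF \<sigma>]] by (auto simp: precedes_def)
    then show "y \<in> \<sigma> ` {1..<inv \<sigma> x}"
      using permutes_inverses(1)[OF \<sigma>, of y] by force
  next
    fix y assume "y \<in> \<sigma> ` {1..<inv \<sigma> x}"
    then obtain i where "i \<in> {1..<inv \<sigma> x}" "y = \<sigma> i" by auto
    then show "y \<in> {y \<in> {1..n}. precedes \<sigma> y x}"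
      using k permutes_inverses(2)[OF \<sigma>] permutes_in_image[OF \<sigma>]
      by (auto simp: precedes_def)
  qed
  moreover have "inj_on \<sigma> {1..<inv \<sigma> x}"
    using permutes_inj[OF \<sigma>] by (rule inj_on_subset) simp
  ultimately show ?thesis by (simp add: card_image)
qed

lemma permutes_eqI_precedes:
  assumes \<sigma>: "\<sigma> permutes {1..n}" and \<sigma>': "\<sigma>' permutes {1..n}"
    and same: "\<And>x y. x \<in> {1..n} \<Longrightarrow> y \<in> {1..n} \<Longrightarrow> precedes \<sigma> x y = precedes \<sigma>' x y"
  shows "\<sigma> = \<sigma>'"
proof -
  have "inv \<sigma> x = inv \<sigma>' x" for x
  proof (cases "x \<in> {1..n}")
    case True
    have "card {y \<in> {1..n}. precedes \<sigma> y x} = card {y \<in> {1..n}. precedes \<sigma>' y x}"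
      using same True by (metis (no_types, lifting) Collect_cong)
    moreover have "inv \<sigma> x \<ge> 1" "inv \<sigma>' x \<ge> 1"
      using True permutes_in_image[OF permutes_inv[OF \<sigma>]] permutes_in_image[OF permutes_inv[OF \<sigma>']]
      by auto
    ultimately show ?thesis
      using card_precedes[OF \<sigma> True] card_precedes[OF \<sigma>' True] by simp
  next
    case False
    then show ?thesis
      using permutes_not_in[OF permutes_inv[OF \<sigma>]] permutes_not_in[OF permutes_inv[OF \<sigma>']] by simp
  qed
  then show ?thesis
    by (metis \<sigma> \<sigma>' ext permutes_inv_inv)
qed

lemma topk_permutes: "\<sigma> \<in> topk n cs \<Longrightarrow> \<sigma> permutes {1..n}"
  by (simp add: topk_def)

lemma finite_topk: "finite (topk n cs)"
  by (rule finite_subset[OF _ finite_permutations[of "{1..n}"]]) (auto simp: topk_def)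

lemma inv_topk_nth:
  assumes "\<rho> \<in> topk n cs" "i < length cs"
  shows "inv \<rho> (cs ! i) = i + 1"
  using assms by (auto simp: topk_def permutes_inv_eq)

lemma inv_topk_not_in:
  assumes \<rho>: "\<rho> \<in> topk n cs" and y: "y \<in> {1..n} - set cs"
  shows "length cs < inv \<rho> y"
proof (rule ccontr)
  define i where "i = inv \<rho> y - 1"
  assume "\<not> length cs < inv \<rho> y"
  moreover have "inv \<rho> y \<in> {1..n}"
    using y permutes_in_image[OF permutes_inv[OF topk_permutes[OF \<rho>]]] by simp
  ultimately have i: "i < length cs" "i + 1 = inv \<rho> y"
    by (auto simp: i_def)
  then have "\<rho> (i + 1) = y"
    using permutes_inverses(1)[OF topk_permutes[OF \<rho>]] by simp
  moreover have "\<rho> (i + 1) = cs ! i"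
    using \<rho> i(1) by (simp add: topk_def)
  ultimately have "y = cs ! i"
    by simp
  then show False
    using y nth_mem[OF i(1)] by simp
qed

lemma precedes_topk_eq:
  assumes \<rho>: "\<rho> \<in> topk n cs" and \<rho>': "\<rho>' \<in> topk n cs"
    and xy: "x \<in> {1..n}" "y \<in> {1..n}" "x \<in> set cs \<or> y \<in> set cs"
  shows "precedes \<rho> x y = precedes \<rho>' x y"
proof -
  have listed: "inv \<rho> z = inv \<rho>' z \<and> inv \<rho> z \<le> length cs" if "z \<in> set cs" for z
  proof -
    obtain i where "i < length cs" "z = cs ! i"
      using \<open>z \<in> set cs\<close> by (auto simp: in_set_conv_nth)
    then show ?thesis
      using inv_topk_nth[OF \<rho>] inv_topk_nth[OF \<rho>'] by simp
  qed
  have unlisted: "length cs < inv \<rho> z \<and> length cs < inv \<rho>' z" if "z \<in> {1..n} - set cs" for z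
    using that inv_topk_not_in[OF \<rho>] inv_topk_not_in[OF \<rho>'] by blast
  show ?thesis
    using xy listed[of x] listed[of y] unlisted[of x] unlisted[of y]
    unfolding precedes_def by (cases "x \<in> set cs"; cases "y \<in> set cs") simp_all
qed

lemma topk_comp_permutes:
  assumes \<pi>: "\<pi> permutes C" and "C \<subseteq> {1..n}" "set cs \<inter> C = {}" and \<sigma>: "\<sigma> \<in> topk n cs"
  shows "\<pi> \<circ> \<sigma> \<in> topk n cs"
proof -
  have "\<pi> \<circ> \<sigma> permutes {1..n}"
    using permutes_compose[OF topk_permutes[OF \<sigma>] permutes_subset[OF \<pi>]] assms(2) by blast
  moreover have "\<pi> (cs ! i) = cs ! i" if "i < length cs" for i
    using permutes_not_in[OF \<pi>] nth_mem[OF that] assms(3) by blast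
  ultimately show ?thesis
    using \<sigma> by (simp add: topk_def)
qed

lemma topk_transitive:
  assumes \<rho>1: "\<rho>1 \<in> topk n cs" and \<rho>2: "\<rho>2 \<in> topk n cs"
  shows "\<exists>\<pi>. \<pi> permutes {1..n} - set cs \<and> \<pi> \<circ> \<rho>1 = \<rho>2"
proof (intro exI conjI)
  have p1: "\<rho>1 permutes {1..n}" and p2: "\<rho>2 permutes {1..n}"
    using \<rho>1 \<rho>2 by (simp_all add: topk_def)
  have "(\<rho>2 \<circ> inv \<rho>1) x = x" if "x \<in> set cs" for x
  proof -
    obtain i where "i < length cs" "x = cs ! i"
      using \<open>x \<in> set cs\<close> by (auto simp: in_set_conv_nth)
    then show ?thesis
      using inv_topk_nth[OF \<rho>1] \<rho>2 by (simp add: topk_def)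
  qed
  then show "\<rho>2 \<circ> inv \<rho>1 permutes {1..n} - set cs"
    by (intro permutes_superset[OF permutes_compose[OF permutes_inv[OF p1] p2]]) simp
  show "\<rho>2 \<circ> inv \<rho>1 \<circ> \<rho>1 = \<rho>2"
    using permutes_inverses(2)[OF p1] by (simp add: fun_eq_iff)
qed

definition perm_of_list :: "nat list \<Rightarrow> nat \<Rightarrow> nat" where
  "perm_of_list xs i = (if 1 \<le> i \<and> i \<le> length xs then xs ! (i - 1) else i)"

lemma perm_of_list_nth: "i < length xs \<Longrightarrow> perm_of_list xs (i + 1) = xs ! i"
  by (simp add: perm_of_list_def)

lemma perm_of_list_permutes:
  assumes xs: "distinct xs" "set xs = {1..length xs}"
  shows "perm_of_list xs permutes {1..length xs}"
proof (rule bij_imp_permutes)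
  have "perm_of_list xs ` {1..length xs} = set xs"
  proof (intro equalityI subsetI)
    fix x assume "x \<in> set xs"
    then obtain i where "i < length xs" "x = xs ! i"
      by (auto simp: in_set_conv_nth)
    then show "x \<in> perm_of_list xs ` {1..length xs}"
      by (auto simp: perm_of_list_nth[symmetric])
  next
    fix x assume "x \<in> perm_of_list xs ` {1..length xs}"
    then obtain i where "i \<in> {1..length xs}" "x = xs ! (i - 1)"
      by (auto simp: perm_of_list_def)
    then show "x \<in> set xs"
      using nth_mem[of "i - 1" xs] by auto
  qed
  then have "perm_of_list xs ` {1..length xs} = {1..length xs}"
    using xs(2) by simp
  then show "bij_betw (perm_of_list xs) {1..length xs} {1..length xs}"
    by (simp add: bij_betw_def eq_card_imp_inj_on)
  show "x \<notin> {1..length xs} \<Longrightarrow> perm_of_list xs x = x" for x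
    by (auto simp: perm_of_list_def)
qed

lemma inv_perm_of_list_nth:
  assumes "distinct xs" "set xs = {1..length xs}" "i < length xs"
  shows "inv (perm_of_list xs) (xs ! i) = i + 1"
  using permutes_inv_eq[OF perm_of_list_permutes[OF assms(1,2)]] perm_of_list_nth[OF assms(3)]
  by blast

lemma perm_of_list_in_topk:
  assumes "distinct (cs @ ys)" "set (cs @ ys) = {1..n}"
  shows "perm_of_list (cs @ ys) \<in> topk n cs"
proof -
  have "length (cs @ ys) = n"
    using distinct_card[OF assms(1)] assms(2) by simp
  moreover have "perm_of_list (cs @ ys) (i + 1) = cs ! i" if "i < length cs" for i
    using perm_of_list_nth[of i "cs @ ys"] that by (simp add: nth_append)
  ultimately show ?thesis
    using perm_of_list_permutes[OF assms(1)] assms(2) by (simp add: topk_def)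
qed

lemma topk_nonempty:
  assumes "distinct cs" "set cs \<subseteq> {1..n}"
  shows "topk n cs \<noteq> {}"
proof -
  let ?ys = "filter (\<lambda>x. x \<notin> set cs) [1..<Suc n]"
  have "distinct (cs @ ?ys)" "set (cs @ ?ys) = {1..n}"
    using assms by (auto simp del: upt_Suc)
  then show ?thesis
    using perm_of_list_in_topk by blast
qed

lemma inv_perm_of_list_append_nth:
  assumes "distinct (cs @ ys)" "set (cs @ ys) = {1..length (cs @ ys)}" "i < length ys"
  shows "inv (perm_of_list (cs @ ys)) (ys ! i) = length cs + i + 1"
proof -
  have "length cs + i < length (cs @ ys)"
    using assms(3) by simp
  from inv_perm_of_list_nth[OF assms(1,2) this] show ?thesis
    by (simp only: nth_append_length_plus)
qed

lemma perm_of_list_agrees_on: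
  assumes xs: "distinct (cs @ ys)" "set (cs @ ys) = {1..n}"
    and sorted: "sorted_wrt (precedes \<tau>) ys"
  shows "agrees_on ({1..n} - set cs) (perm_of_list (cs @ ys)) \<tau>"
  unfolding agrees_on_def
proof (intro ballI)
  have "length (cs @ ys) = n"
    using distinct_card[OF xs(1)] xs(2) by simp
  then have xs_set: "set (cs @ ys) = {1..length (cs @ ys)}"
    using xs(2) by simp
  fix x y assume "x \<in> {1..n} - set cs" "y \<in> {1..n} - set cs"
  then have "x \<in> set ys" "y \<in> set ys"
    using xs(2) unfolding set_append by blast+
  obtain i where i: "i < length ys" "x = ys ! i"
    using \<open>x \<in> set ys\<close> by (auto simp: in_set_conv_nth)
  obtain j where j: "j < length ys" "y = ys ! j"
    using \<open>y \<in> set ys\<close> by (auto simp: in_set_conv_nth)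
  show "precedes (perm_of_list (cs @ ys)) x y = precedes \<tau> x y"
    using sorted_wrt_precedes_nth_iff[OF sorted i(1) j(1)] i j
      inv_perm_of_list_append_nth[OF xs(1) xs_set] by (simp add: precedes_def)
qed

definition listing :: "nat \<Rightarrow> (nat \<Rightarrow> nat) \<Rightarrow> nat list" where
  "listing n \<sigma> = map \<sigma> [1..<n+1]"

lemma set_listing: "\<sigma> permutes {1..n} \<Longrightarrow> set (listing n \<sigma>) = {1..n}"
  by (simp add: listing_def permutes_image atLeastLessThanSuc_atLeastAtMost del: upt_Suc)

lemma distinct_listing: "\<sigma> permutes {1..n} \<Longrightarrow> distinct (listing n \<sigma>)"
  by (simp add: listing_def distinct_map inj_on_subset[OF permutes_inj])

lemma sorted_wrt_precedes_listing: "\<sigma> permutes S \<Longrightarrow> sorted_wrt (precedes \<sigma>) (listing n \<sigma>)"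
  by (simp add: listing_def sorted_wrt_map precedes_def permutes_inverses(2) del: upt_Suc)

lemma listing_topk:
  assumes "\<sigma> \<in> topk n bs" "length bs \<le> n"
  shows "listing n \<sigma> = bs @ drop (length bs) (listing n \<sigma>)"
proof -
  have "take (length bs) (listing n \<sigma>) = bs"
    using assms by (intro nth_equalityI) (auto simp: listing_def topk_def nth_append simp del: upt_Suc)
  then show ?thesis
    by (metis append_take_drop_id)
qed

definition discordant_pairs :: "nat \<Rightarrow> (nat \<Rightarrow> nat) \<Rightarrow> (nat \<Rightarrow> nat) \<Rightarrow> (nat \<times> nat) set" where
  "discordant_pairs n \<sigma> \<tau> = {(x, y). x \<in> {1..n} \<and> y \<in> {1..n} \<and> x < y \<and> discordant \<sigma> \<tau> x y}"

lemma kendall_eq_card_discordant_pairs: "kendall n \<sigma> \<tau> = card (discordant_pairs n \<sigma> \<tau>)"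
  by (simp add: kendall_def discordant_pairs_def)

lemma finite_discordant_pairs: "finite (discordant_pairs n \<sigma> \<tau>)"
  by (rule finite_subset[of _ "{1..n} \<times> {1..n}"]) (auto simp: discordant_pairs_def)

lemma discordant_iff_precedes:
  assumes "\<sigma> permutes S" "\<tau> permutes S" "x \<noteq> y"
  shows "discordant \<sigma> \<tau> x y \<longleftrightarrow> precedes \<sigma> x y \<noteq> precedes \<tau> x y"
proof -
  have "inv \<sigma> x \<noteq> inv \<sigma> y" "inv \<tau> x \<noteq> inv \<tau> y"
    using assms by (metis permutes_inverses(1))+
  then show ?thesis
    by (auto simp: discordant_def precedes_def mult_less_0_iff)
qed

lemma discordant_commute: "discordant \<sigma> \<tau> x y = discordant \<sigma> \<tau> y x"
  unfolding discordant_def by argo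

lemma discordant_pairs_subset:
  assumes \<rho>0: "\<rho>0 \<in> topk n as" and \<rho>: "\<rho> \<in> topk n as" and \<tau>: "\<tau> permutes {1..n}"
    and agrees: "agrees_on ({1..n} - set as) \<rho>0 \<tau>"
  shows "discordant_pairs n \<rho>0 \<tau> \<subseteq> discordant_pairs n \<rho> \<tau>"
proof
  fix p assume "p \<in> discordant_pairs n \<rho>0 \<tau>"
  then obtain x y where p: "p = (x, y)" and xy: "x \<in> {1..n}" "y \<in> {1..n}" "x < y"
    and "discordant \<rho>0 \<tau> x y"
    by (auto simp: discordant_pairs_def)
  then have differ: "precedes \<rho>0 x y \<noteq> precedes \<tau> x y"
    using discordant_iff_precedes[OF topk_permutes[OF \<rho>0] \<tau>] by simp
  then have "x \<in> set as \<or> y \<in> set as"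
    using agrees xy unfolding agrees_on_def by blast
  then have "precedes \<rho> x y \<noteq> precedes \<tau> x y"
    using differ precedes_topk_eq[OF \<rho> \<rho>0 xy(1,2)] by simp
  then show "p \<in> discordant_pairs n \<rho> \<tau>"
    using p xy discordant_iff_precedes[OF topk_permutes[OF \<rho>] \<tau>]
    by (auto simp: discordant_pairs_def)
qed

lemma discordant_pairs_neq:
  assumes \<rho>0: "\<rho>0 \<in> topk n as" and \<rho>: "\<rho> \<in> topk n as" and \<tau>: "\<tau> permutes {1..n}"
    and agrees: "agrees_on ({1..n} - set as) \<rho>0 \<tau>" and "\<rho> \<noteq> \<rho>0"
  shows "discordant_pairs n \<rho>0 \<tau> \<noteq> discordant_pairs n \<rho> \<tau>"
proof -
  obtain x y where xy: "x \<in> {1..n}" "y \<in> {1..n}" and differ: "precedes \<rho> x y \<noteq> precedes \<rho>0 x y"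
    using permutes_eqI_precedes[OF topk_permutes[OF \<rho>] topk_permutes[OF \<rho>0]] \<open>\<rho> \<noteq> \<rho>0\<close> by blast
  then have "x \<noteq> y"
    using precedes_irrefl by metis
  have "x \<notin> set as" "y \<notin> set as"
    using differ precedes_topk_eq[OF \<rho> \<rho>0 xy] by blast+
  then have "precedes \<rho>0 x y = precedes \<tau> x y"
    using agrees xy by (auto simp: agrees_on_def)
  then have "discordant \<rho> \<tau> x y \<and> \<not> discordant \<rho>0 \<tau> x y"
    using differ \<open>x \<noteq> y\<close> discordant_iff_precedes[OF topk_permutes[OF \<rho>] \<tau>]
      discordant_iff_precedes[OF topk_permutes[OF \<rho>0] \<tau>] by blast
  then have "(min x y, max x y) \<in> discordant_pairs n \<rho> \<tau> - discordant_pairs n \<rho>0 \<tau>"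
    using xy \<open>x \<noteq> y\<close> discordant_commute
    by (cases "x < y") (auto simp: discordant_pairs_def min_def max_def)
  then show ?thesis
    by blast
qed

text \<open>The discordant pairs of \<open>\<rho>0\<close> form a proper subset of those of any other ranking
  of the top-k set, so \<open>\<rho>0\<close> is the unique minimiser.\<close>
lemma proj_topk_eqI:
  assumes \<rho>0: "\<rho>0 \<in> topk n as" and \<tau>: "\<tau> permutes {1..n}"
    and agrees: "agrees_on ({1..n} - set as) \<rho>0 \<tau>"
  shows "proj n (topk n as) \<tau> = \<rho>0"
  unfolding proj_def
proof (rule the_equality)
  show "\<rho>0 \<in> topk n as \<and> (\<forall>\<rho>\<in>topk n as. kendall n \<rho>0 \<tau> \<le> kendall n \<rho> \<tau>)"
    using \<rho>0 discordant_pairs_subset[OF \<rho>0 _ \<tau> agrees]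
    by (simp add: kendall_eq_card_discordant_pairs card_mono finite_discordant_pairs)
next
  fix \<rho> assume \<rho>: "\<rho> \<in> topk n as \<and> (\<forall>\<rho>'\<in>topk n as. kendall n \<rho> \<tau> \<le> kendall n \<rho>' \<tau>)"
  show "\<rho> = \<rho>0"
  proof (rule ccontr)
    assume "\<rho> \<noteq> \<rho>0"
    then have "discordant_pairs n \<rho>0 \<tau> \<subset> discordant_pairs n \<rho> \<tau>"
      using discordant_pairs_subset[OF \<rho>0 _ \<tau> agrees] discordant_pairs_neq[OF \<rho>0 _ \<tau> agrees] \<rho>
      by blast
    then have "kendall n \<rho>0 \<tau> < kendall n \<rho> \<tau>"
      by (simp add: kendall_eq_card_discordant_pairs psubset_card_mono finite_discordant_pairs)
    then show False
      using \<rho> \<rho>0 by fastforce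
  qed
qed

lemma proj_topk:
  assumes "distinct as" "set as \<subseteq> {1..n}" and \<tau>: "\<tau> permutes {1..n}"
  defines "\<rho> \<equiv> perm_of_list (as @ filter (\<lambda>x. x \<notin> set as) (listing n \<tau>))"
  shows "proj n (topk n as) \<tau> = \<rho>" and "\<rho> \<in> topk n as"
    and "agrees_on ({1..n} - set as) \<rho> \<tau>"
proof -
  have xs: "distinct (as @ filter (\<lambda>x. x \<notin> set as) (listing n \<tau>))"
    "set (as @ filter (\<lambda>x. x \<notin> set as) (listing n \<tau>)) = {1..n}"
    using assms(1,2) distinct_listing[OF \<tau>] set_listing[OF \<tau>] by auto
  show \<rho>: "\<rho> \<in> topk n as"
    unfolding \<rho>_def using xs by (rule perm_of_list_in_topk)
  show agrees: "agrees_on ({1..n} - set as) \<rho> \<tau>"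
    unfolding \<rho>_def using xs sorted_wrt_filter[OF sorted_wrt_precedes_listing[OF \<tau>]]
    by (rule perm_of_list_agrees_on)
  show "proj n (topk n as) \<tau> = \<rho>"
    using proj_topk_eqI[OF \<rho> \<tau> agrees] .
qed

lemma agrees_on_comp:
  assumes "bij \<pi>" "bij \<rho>" "bij \<tau>" "inv \<pi> ` A \<subseteq> A" "agrees_on A \<rho> \<tau>"
  shows "agrees_on A (\<pi> \<circ> \<rho>) (\<pi> \<circ> \<tau>)"
  unfolding agrees_on_def
proof (intro ballI)
  fix x y assume "x \<in> A" "y \<in> A"
  then have "inv \<pi> x \<in> A" "inv \<pi> y \<in> A"
    using assms(4) by blast+
  then show "precedes (\<pi> \<circ> \<rho>) x y = precedes (\<pi> \<circ> \<tau>) x y"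
    using assms(5) by (simp add: agrees_on_def precedes_comp assms(1-3))
qed

lemma proj_topk_comp:
  assumes as: "distinct as" "set as \<subseteq> {1..n}" and \<tau>: "\<tau> permutes {1..n}"
    and \<pi>: "\<pi> permutes C" and C: "C \<subseteq> {1..n}" "set as \<inter> C = {}"
  shows "proj n (topk n as) (\<pi> \<circ> \<tau>) = \<pi> \<circ> proj n (topk n as) \<tau>"
proof -
  let ?\<rho> = "proj n (topk n as) \<tau>"
  have \<rho>: "?\<rho> \<in> topk n as" "agrees_on ({1..n} - set as) ?\<rho> \<tau>"
    using proj_topk[OF as \<tau>] by simp_all
  have \<pi>': "\<pi> permutes {1..n}"
    using permutes_subset[OF \<pi> C(1)] .
  have "inv \<pi> x \<in> {1..n} - set as" if "x \<in> {1..n} - set as" for x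
  proof (cases "x \<in> C")
    case True
    then have "inv \<pi> x \<in> C"
      using permutes_in_image[OF permutes_inv[OF \<pi>]] by simp
    then show ?thesis
      using C by blast
  next
    case False
    then show ?thesis
      using that permutes_not_in[OF permutes_inv[OF \<pi>]] by simp
  qed
  then have "agrees_on ({1..n} - set as) (\<pi> \<circ> ?\<rho>) (\<pi> \<circ> \<tau>)"
    using agrees_on_comp[OF permutes_bij[OF \<pi>'] permutes_bij[OF topk_permutes[OF \<rho>(1)]]
        permutes_bij[OF \<tau>] _ \<rho>(2)] by blast
  moreover have "\<pi> \<circ> ?\<rho> \<in> topk n as"
    using topk_comp_permutes[OF \<pi> C \<rho>(1)] .
  ultimately show ?thesis
    using proj_topk_eqI[OF _ permutes_compose[OF \<tau> \<pi>']] by blast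
qed

lemma proj_topk_in_topk_append:
  assumes as: "distinct as" "set as \<subseteq> {1..n}" and bs: "distinct bs" "set bs \<subseteq> {1..n}"
    and \<tau>: "\<tau> \<in> topk n bs"
  shows "proj n (topk n as) \<tau> \<in> topk n (as @ filter (\<lambda>b. b \<notin> set as) bs)"
proof -
  let ?P = "\<lambda>x. x \<notin> set as" and ?rest = "drop (length bs) (listing n \<tau>)"
  have "length bs \<le> n"
    using distinct_card[OF bs(1)] card_mono[OF _ bs(2)] by fastforce
  then have eq: "as @ filter ?P (listing n \<tau>) = (as @ filter ?P bs) @ filter ?P ?rest"
    using listing_topk[OF \<tau>] by (metis append_assoc filter_append)
  have "distinct (as @ filter ?P (listing n \<tau>))" "set (as @ filter ?P (listing n \<tau>)) = {1..n}"
    using as distinct_listing[OF topk_permutes[OF \<tau>]] set_listing[OF topk_permutes[OF \<tau>]] by auto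
  then have "perm_of_list (as @ filter ?P (listing n \<tau>)) \<in> topk n (as @ filter ?P bs)"
    unfolding eq by (rule perm_of_list_in_topk)
  then show ?thesis
    using proj_topk(1)[OF as topk_permutes[OF \<tau>]] by simp
qed

lemma image_comp_topk:
  assumes \<pi>: "\<pi> permutes C" and C: "C \<subseteq> {1..n}" "set bs \<inter> C = {}"
  shows "(\<circ>) \<pi> ` topk n bs = topk n bs"
proof (intro equalityI subsetI)
  fix \<sigma> assume "\<sigma> \<in> topk n bs"
  then have "inv \<pi> \<circ> \<sigma> \<in> topk n bs"
    using topk_comp_permutes[OF permutes_inv[OF \<pi>] C] by blast
  moreover have "\<sigma> = \<pi> \<circ> (inv \<pi> \<circ> \<sigma>)"
    using permutes_inverses(1)[OF \<pi>] by (simp add: fun_eq_iff)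
  ultimately show "\<sigma> \<in> (\<circ>) \<pi> ` topk n bs"
    by blast
qed (use topk_comp_permutes[OF \<pi> C] in blast)

lemma map_pmf_proj_topk_invariant:
  assumes as: "distinct as" "set as \<subseteq> {1..n}" and bs: "distinct bs" "set bs \<subseteq> {1..n}"
    and \<pi>: "\<pi> permutes {1..n} - set as - set bs"
  defines "\<mu> \<equiv> map_pmf (proj n (topk n as)) (pmf_of_set (topk n bs))"
  shows "map_pmf ((\<circ>) \<pi>) \<mu> = \<mu>"
proof -
  have C: "{1..n} - set as - set bs \<subseteq> {1..n}" "set as \<inter> ({1..n} - set as - set bs) = {}"
    "set bs \<inter> ({1..n} - set as - set bs) = {}"
    by auto
  have "map_pmf ((\<circ>) \<pi>) \<mu> = map_pmf (\<lambda>\<tau>. proj n (topk n as) (\<pi> \<circ> \<tau>)) (pmf_of_set (topk n bs))"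
    unfolding \<mu>_def map_pmf_comp
    using proj_topk_comp[OF as topk_permutes \<pi> C(1,2)] finite_topk topk_nonempty[OF bs]
    by (intro map_pmf_cong) auto
  also have "\<dots> = map_pmf (proj n (topk n as)) (map_pmf ((\<circ>) \<pi>) (pmf_of_set (topk n bs)))"
    by (simp add: map_pmf_comp)
  also have "map_pmf ((\<circ>) \<pi>) (pmf_of_set (topk n bs)) = pmf_of_set ((\<circ>) \<pi> ` topk n bs)"
    using fun.inj_map[OF permutes_inj[OF \<pi>]] finite_topk topk_nonempty[OF bs]
    by (intro map_pmf_of_set_inj) (auto intro: inj_on_subset)
  also have "(\<circ>) \<pi> ` topk n bs = topk n bs"
    using image_comp_topk[OF \<pi> C(1,3)] .
  finally show ?thesis
    unfolding \<mu>_def .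
qed

theorem lemma7:
  fixes n :: nat and as bs :: "nat list"
  assumes "distinct as" and "set as \<subseteq> {1..n}"
    and "distinct bs" and "set bs \<subseteq> {1..n}"
  shows "map_pmf (proj n (topk n as)) (pmf_of_set (topk n bs))
         = pmf_of_set (topk n (as @ filter (\<lambda>b. b \<notin> set as) bs))"
proof (rule pmf_of_set_eqI_transitive)
  let ?cs = "as @ filter (\<lambda>b. b \<notin> set as) bs"
  show "finite (topk n ?cs)"
    by (rule finite_topk)
  show "set_pmf (map_pmf (proj n (topk n as)) (pmf_of_set (topk n bs))) \<subseteq> topk n ?cs"
    using proj_topk_in_topk_append[OF assms] finite_topk topk_nonempty[OF assms(3,4)] by auto
  fix \<rho>1 \<rho>2 assume "\<rho>1 \<in> topk n ?cs" "\<rho>2 \<in> topk n ?cs"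
  then obtain \<pi> where \<pi>: "\<pi> permutes {1..n} - set ?cs" "\<pi> \<circ> \<rho>1 = \<rho>2"
    using topk_transitive by blast
  moreover have "{1..n} - set ?cs = {1..n} - set as - set bs"
    by auto
  ultimately show "\<exists>f. inj f \<and> f \<rho>1 = \<rho>2 \<and>
      map_pmf f (map_pmf (proj n (topk n as)) (pmf_of_set (topk n bs))) =
      map_pmf (proj n (topk n as)) (pmf_of_set (topk n bs))"
    using map_pmf_proj_topk_invariant[OF assms] fun.inj_map[OF permutes_inj[OF \<pi>(1)]]
    by (intro exI[of _ "(\<circ>) \<pi>"]) simp
qed

end
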